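(* Let $\mathcal{A}$ be a finite abelian group with $|\mathcal{A}|\ge 3$. Let $H_1(p_1,p_2)$ denote a graph consisting of a triangle $v_2v_3v_4$, a vertex $v_1$ adjacent to $v_2$, $p_1$ pendant vertices adjacent to $v_1$, $p_2\ge0$ pendant vertices adjacent to $v_2$, and $t\ge 1$ further neighbours of $v_1$, each of which is a support vertex all of whose neighbours other than $v_1$ are pendant vertices. Suppose $p_1\ge 1$. Then $H_1(p_1,p_2)$ is $\mathcal{A}$-vertex magic if and only if $p_2=0$ and: (i) if $p_1=1$, every support neighbour of $v_1$ is a strong support vertex and there exist an involution $h$ of $\mathcal{A}$ and $g\in\mathcal{A}\setminus\{0,h\}$ with $h\neq (d(v_1)-2)g$; (ii) if $p_1\ge 2$, every support neighbour of $v_1$ is a strong support vertex and $|\mathcal{A}|$ is even.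
   Context: A pendant vertex has degree $1$; a support vertex is a vertex adjacent to a pendant vertex, and a strong support vertex is one adjacent to at least two pendant vertices. $d(v)$ is the degree of $v$; an involution is an element of order $2$. A map $\ell:V(G)\to\mathcal{A}\setminus\{0\}$ is an $\mathcal{A}$-vertex magic labeling if there is $\mu\in\mathcal{A}$ with $\sum_{u\in N(v)}\ell(u)=\mu$ for every vertex $v$; $G$ is $\mathcal{A}$-vertex magic if such a labeling exists. *)

theory Defs
  imports Main
begin

text \<open>Simple graphs given by a vertex set V and a symmetric irreflexive adjacency relation.\<close>

definition nbrs :: "'v set \<Rightarrow> ('v \<Rightarrow> 'v \<Rightarrow> bool) \<Rightarrow> 'v \<Rightarrow> 'v set" where
  "nbrs V adj v = {u \<in> V. adj v u}"

definition degree :: "'v set \<Rightarrow> ('v \<Rightarrow> 'v \<Rightarrow> bool) \<Rightarrow> 'v \<Rightarrow> nat" where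
  "degree V adj v = card (nbrs V adj v)"

definition vertex_magic_labeling ::
  "'v set \<Rightarrow> ('v \<Rightarrow> 'v \<Rightarrow> bool) \<Rightarrow> ('v \<Rightarrow> 'a::ab_group_add) \<Rightarrow> bool" where
  "vertex_magic_labeling V adj l \<longleftrightarrow>
     (\<forall>v\<in>V. l v \<noteq> 0) \<and> (\<exists>\<mu>. \<forall>v\<in>V. (\<Sum>u\<in>nbrs V adj v. l u) = \<mu>)"

definition vertex_magic ::
  "'a::ab_group_add itself \<Rightarrow> 'v set \<Rightarrow> ('v \<Rightarrow> 'v \<Rightarrow> bool) \<Rightarrow> bool" where
  "vertex_magic _ V adj \<longleftrightarrow> (\<exists>l :: 'v \<Rightarrow> 'a. vertex_magic_labeling V adj l)"

primrec nmul :: "nat \<Rightarrow> 'a::ab_group_add \<Rightarrow> 'a" where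
  "nmul 0 g = 0"
| "nmul (Suc n) g = g + nmul n g"

definition involution :: "'a::ab_group_add \<Rightarrow> bool" where
  "involution h \<longleftrightarrow> h \<noteq> 0 \<and> h + h = 0"

text \<open>The graph H_1(p1,p2): triangle V2 V3 V4, V1 adjacent to V2, p1 pendants P1 i at V1,
  p2 pendants P2 i at V2, t support neighbours S j of V1, and S j has q j pendants L j k.\<close>
datatype hvert = V1 | V2 | V3 | V4 | P1 nat | P2 nat | S nat | L nat nat

definition H1_V :: "nat \<Rightarrow> nat \<Rightarrow> nat \<Rightarrow> (nat \<Rightarrow> nat) \<Rightarrow> hvert set" where
  "H1_V p1 p2 t q = {V1, V2, V3, V4} \<union> P1 ` {..<p1} \<union> P2 ` {..<p2} \<union> S ` {..<t}
      \<union> {L j k | j k. j < t \<and> k < q j}"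

fun H1_edge0 :: "hvert \<Rightarrow> hvert \<Rightarrow> bool" where
  "H1_edge0 V2 V3 = True"
| "H1_edge0 V3 V4 = True"
| "H1_edge0 V2 V4 = True"
| "H1_edge0 V1 V2 = True"
| "H1_edge0 V1 (P1 i) = True"
| "H1_edge0 V2 (P2 i) = True"
| "H1_edge0 V1 (S j) = True"
| "H1_edge0 (S j) (L j' k) = (j = j')"
| "H1_edge0 _ _ = False"

definition H1_adj :: "hvert \<Rightarrow> hvert \<Rightarrow> bool" where
  "H1_adj u v \<longleftrightarrow> H1_edge0 u v \<or> H1_edge0 v u"

end

theory Submission
  imports Defs
begin

text \<open>
  In a magic labeling with constant \<mu>, a vertex adjacent to a pendant vertex is labelled \<mu>;
  hence V1 and every S j carry \<mu>. The two triangle vertices V3, V4 force l V3 = l V4 =: h, and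
  the sum at V2 then gives h + h = 0, so h is an involution and l V2 = \<mu> - h (a pendant at V2
  would force l V2 = \<mu> and l V4 = 0, so p2 = 0). The sum at S j says that the q j pendant labels
  at S j add up to 0, which is impossible for q j = 1, and the sum at V1 says that the p1 pendant
  labels at V1 add up to h - t\<mu>. Conversely, these constraints determine a labeling as soon as
  0 and h - t\<mu> are sums of the required numbers of nonzero elements. In a group with at least
  three elements every element is a sum of n \<ge> 2 nonzero elements, while for n = 1 this just
  says h \<noteq> t\<mu>; and a finite abelian group has an involution iff its order is even.
\<close>

lemma even_card_fixpoint_free_involution:
  assumes "finite X"
    and "\<And>x. x \<in> X \<Longrightarrow> f x \<in> X" "\<And>x. x \<in> X \<Longrightarrow> f (f x) = x" "\<And>x. x \<in> X \<Longrightarrow> f x \<noteq> x"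
  shows "even (card X)"
proof -
  let ?C = "(\<lambda>x. {x, f x}) ` X"
  have "2 * card ?C = card (\<Union>?C)"
  proof (rule card_partition)
    fix c1 c2
    assume "c1 \<in> ?C" "c2 \<in> ?C" "c1 \<noteq> c2"
    then obtain x y where "x \<in> X" "y \<in> X" "c1 = {x, f x}" "c2 = {y, f y}" "{x, f x} \<noteq> {y, f y}"
      by blast
    then show "c1 \<inter> c2 = {}"
      using assms(3) by (metis Int_emptyI insert_commute insertE singletonD)
  qed (use assms(1,2) assms(4)[THEN not_sym] in auto)
  moreover have "\<Union>?C = X"
    using assms(2) by auto
  ultimately show ?thesis
    by (metis dvd_triv_left)
qed

lemma even_card_iff_involution:
  "even (card (UNIV :: 'a set)) \<longleftrightarrow> (\<exists>h::'a::{ab_group_add, finite}. involution h)"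
proof
  assume even: "even (card (UNIV :: 'a set))"
  show "\<exists>h::'a. involution h"
  proof (rule ccontr)
    assume no_involution: "\<nexists>h::'a. involution h"
    have "- x \<noteq> x" if "x \<noteq> 0" for x :: 'a
    proof
      assume "- x = x"
      then have "x + x = 0"
        by (metis add.right_inverse)
      with that no_involution show False
        by (auto simp: involution_def)
    qed
    then have "even (card (UNIV - {0::'a}))"
      by (intro even_card_fixpoint_free_involution[where f = uminus]) simp_all
    moreover have "card (UNIV :: 'a set) = Suc (card (UNIV - {0::'a}))"
      by (rule card_Suc_Diff1[symmetric]) simp_all
    ultimately show False
      using even by (metis even_Suc)
  qed
next
  assume "\<exists>h::'a. involution h"
  then obtain h :: 'a where "h \<noteq> 0" "h + h = 0"
    by (auto simp: involution_def)
  then show "even (card (UNIV :: 'a set))"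
    by (intro even_card_fixpoint_free_involution[where f = "\<lambda>x. x + h"]) (simp_all add: add.assoc)
qed

lemma card_ge_3_ex_neq:
  assumes "3 \<le> card (UNIV :: 'a set)"
  shows "\<exists>c::'a::finite. c \<noteq> x \<and> c \<noteq> y"
proof (rule ccontr)
  assume "\<not> ?thesis"
  then have "card (UNIV :: 'a set) \<le> card {x, y}"
    by (intro card_mono) auto
  also have "\<dots> \<le> 2"
    by (simp add: card_insert_le_m1)
  finally show False
    using assms by simp
qed

lemma sum_const_lessThan_nmul: "(\<Sum>k<n. c) = nmul n c"
  by (induction n) (simp_all add: add.commute)

definition sum_of_nonzeros :: "nat \<Rightarrow> 'a::ab_group_add \<Rightarrow> bool" where
  "sum_of_nonzeros n s \<longleftrightarrow> (\<exists>a. (\<forall>k<n. a k \<noteq> 0) \<and> (\<Sum>k<n. a k) = s)"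

lemma sum_of_nonzeros_1_iff: "sum_of_nonzeros 1 s \<longleftrightarrow> s \<noteq> 0"
  by (auto simp: sum_of_nonzeros_def)

lemma sum_of_nonzeros_Suc:
  assumes "c \<noteq> 0" and "sum_of_nonzeros n (s - c)"
  shows "sum_of_nonzeros (Suc n) s"
proof -
  obtain a where "\<forall>k<n. a k \<noteq> 0" "(\<Sum>k<n. a k) = s - c"
    using assms(2) by (auto simp: sum_of_nonzeros_def)
  then have "(\<forall>k<Suc n. (a(n := c)) k \<noteq> 0) \<and> (\<Sum>k<Suc n. (a(n := c)) k) = s"
    using assms(1) by (auto simp: less_Suc_eq)
  then show ?thesis
    unfolding sum_of_nonzeros_def by blast
qed

lemma sum_of_nonzeros_ge_2:
  assumes "3 \<le> card (UNIV :: 'a set)" and "2 \<le> n"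
  shows "sum_of_nonzeros n (s::'a::{ab_group_add, finite})"
  using assms(2)
proof (induction n arbitrary: s rule: dec_induct)
  case base
  obtain c :: 'a where "c \<noteq> 0" "c \<noteq> s"
    using card_ge_3_ex_neq[OF assms(1)] by blast
  then have "sum_of_nonzeros 1 (s - c)"
    by (subst sum_of_nonzeros_1_iff) simp
  then show ?case
    using sum_of_nonzeros_Suc[of c 1 s] \<open>c \<noteq> 0\<close> by (simp add: numeral_2_eq_2)
next
  case (step n)
  obtain c :: 'a where "c \<noteq> 0"
    using card_ge_3_ex_neq[OF assms(1)] by blast
  then show ?case
    using step.IH sum_of_nonzeros_Suc by blast
qed

lemma H1_V_iff [simp]:
  "V1 \<in> H1_V p1 p2 t q" "V2 \<in> H1_V p1 p2 t q" "V3 \<in> H1_V p1 p2 t q" "V4 \<in> H1_V p1 p2 t q"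
  "P1 i \<in> H1_V p1 p2 t q \<longleftrightarrow> i < p1"
  "P2 i \<in> H1_V p1 p2 t q \<longleftrightarrow> i < p2"
  "S j \<in> H1_V p1 p2 t q \<longleftrightarrow> j < t"
  "L j k \<in> H1_V p1 p2 t q \<longleftrightarrow> j < t \<and> k < q j"
  by (auto simp: H1_V_def)

lemma H1_nbrs:
  "nbrs (H1_V p1 p2 t q) H1_adj V1 = insert V2 (P1 ` {..<p1} \<union> S ` {..<t})"
  "nbrs (H1_V p1 p2 t q) H1_adj V2 = {V1, V3, V4} \<union> P2 ` {..<p2}"
  "nbrs (H1_V p1 p2 t q) H1_adj V3 = {V2, V4}"
  "nbrs (H1_V p1 p2 t q) H1_adj V4 = {V2, V3}"
  "nbrs (H1_V p1 p2 t q) H1_adj (P1 i) = {V1}"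
  "nbrs (H1_V p1 p2 t q) H1_adj (P2 i) = {V2}"
  "j < t \<Longrightarrow> nbrs (H1_V p1 p2 t q) H1_adj (S j) = insert V1 (L j ` {..<q j})"
  "j < t \<Longrightarrow> nbrs (H1_V p1 p2 t q) H1_adj (L j k) = {S j}"
  by (auto simp: nbrs_def H1_adj_def elim: H1_edge0.elims)

lemma H1_nbrs_sum_V1:
  "(\<Sum>u\<in>nbrs (H1_V p1 p2 t q) H1_adj V1. f u) = f V2 + (\<Sum>i<p1. f (P1 i)) + (\<Sum>j<t. f (S j))"
proof -
  have "(\<Sum>u\<in>P1 ` {..<p1} \<union> S ` {..<t}. f u) = (\<Sum>u\<in>P1 ` {..<p1}. f u) + (\<Sum>u\<in>S ` {..<t}. f u)"
    by (rule sum.union_disjoint) auto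
  also have "\<dots> = (\<Sum>i<p1. f (P1 i)) + (\<Sum>j<t. f (S j))"
    by (simp add: sum.reindex inj_on_def)
  finally show ?thesis
    unfolding H1_nbrs by (subst sum.insert) (auto simp: add.assoc)
qed

lemma H1_nbrs_sum_V2:
  "(\<Sum>u\<in>nbrs (H1_V p1 p2 t q) H1_adj V2. f u) = f V1 + f V3 + f V4 + (\<Sum>i<p2. f (P2 i))"
  by (simp add: H1_nbrs sum.reindex inj_on_def image_iff add.assoc)

lemma H1_nbrs_sum_S:
  "j < t \<Longrightarrow> (\<Sum>u\<in>nbrs (H1_V p1 p2 t q) H1_adj (S j). f u) = f V1 + (\<Sum>k<q j. f (L j k))"
  by (simp add: H1_nbrs sum.reindex inj_on_def image_iff)

lemma H1_degree_V1: "degree (H1_V p1 p2 t q) H1_adj V1 = 1 + p1 + t"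
  using H1_nbrs_sum_V1[where f = "\<lambda>_. 1 :: nat"] by (simp add: degree_def)

lemma H1_magic_labeling_constraints:
  fixes l :: "hvert \<Rightarrow> 'a::ab_group_add"
  assumes nonzero: "\<forall>v\<in>H1_V p1 p2 t q. l v \<noteq> 0"
    and magic: "\<forall>v\<in>H1_V p1 p2 t q. (\<Sum>u\<in>nbrs (H1_V p1 p2 t q) H1_adj v. l u) = \<mu>"
    and "1 \<le> p1" and "\<forall>j<t. 1 \<le> q j"
  shows "p2 = 0 \<and> (\<forall>j<t. 2 \<le> q j) \<and> involution (l V3) \<and> \<mu> \<noteq> 0 \<and> \<mu> \<noteq> l V3
    \<and> sum_of_nonzeros p1 (l V3 - nmul t \<mu>)"
proof -
  let ?V = "H1_V p1 p2 t q"
  have support: "l v = \<mu>" if "u \<in> ?V" "nbrs ?V H1_adj u = {v}" for u v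
    using magic that by force
  have V1: "l V1 = \<mu>"
    using support[of "P1 0"] \<open>1 \<le> p1\<close> by (simp add: H1_nbrs)
  have S: "l (S j) = \<mu>" if "j < t" for j
    using support[of "L j 0" "S j"] that assms(4) by (force simp: H1_nbrs)
  have V3: "l V2 + l V4 = \<mu>"
    using magic[rule_format, of V3] by (simp add: H1_nbrs)
  have V4: "l V2 + l V3 = \<mu>"
    using magic[rule_format, of V4] by (simp add: H1_nbrs)
  have V3_V4: "l V4 = l V3"
    using V3 V4 by (metis add_left_cancel)
  have "p2 = 0"
  proof (rule ccontr)
    assume "p2 \<noteq> 0"
    then have "l V2 = \<mu>"
      using support[of "P2 0"] by (simp add: H1_nbrs)
    then show False
      using V3 nonzero by auto
  qed
  then have "l V1 + l V3 + l V4 = \<mu>"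
    using magic[rule_format, of V2] by (simp add: H1_nbrs_sum_V2)
  then have "involution (l V3)"
    using V1 V3_V4 nonzero by (simp add: involution_def add.assoc)
  have V2: "l V2 = \<mu> - l V3"
    using V4 by (simp add: eq_diff_eq)
  have "2 \<le> q j" if "j < t" for j
  proof (rule ccontr)
    assume "\<not> 2 \<le> q j"
    then have "q j = 1"
      using that assms(4) by force
    moreover have "\<mu> + (\<Sum>k<q j. l (L j k)) = \<mu>"
      using magic[rule_format, of "S j"] that V1 by (simp add: H1_nbrs_sum_S)
    ultimately show False
      using nonzero that by auto
  qed
  moreover have "(\<Sum>i<p1. l (P1 i)) = l V3 - nmul t \<mu>"
  proof -
    have "(\<Sum>j<t. l (S j)) = nmul t \<mu>"
      using S by (simp add: sum_const_lessThan_nmul)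
    then have "l V2 + (\<Sum>i<p1. l (P1 i)) + nmul t \<mu> = \<mu>"
      using magic[rule_format, of V1] by (simp add: H1_nbrs_sum_V1)
    then show ?thesis
      by (simp add: V2 algebra_simps)
  qed
  then have "sum_of_nonzeros p1 (l V3 - nmul t \<mu>)"
    using nonzero unfolding sum_of_nonzeros_def by (intro exI[of _ "\<lambda>i. l (P1 i)"]) simp
  ultimately show ?thesis
    using \<open>p2 = 0\<close> \<open>involution (l V3)\<close> V1 V2 nonzero by auto
qed

lemma H1_vertex_magicI:
  fixes h \<mu> :: "'a::{ab_group_add, finite}"
  assumes "3 \<le> card (UNIV :: 'a set)" and "p2 = 0" and "\<forall>j<t. 2 \<le> q j"
    and "involution h" and "\<mu> \<noteq> 0" and "\<mu> \<noteq> h" and "sum_of_nonzeros p1 (h - nmul t \<mu>)"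
  shows "vertex_magic (A :: 'a itself) (H1_V p1 p2 t q) H1_adj"
proof -
  obtain a where a: "\<forall>i<p1. a i \<noteq> 0" "(\<Sum>i<p1. a i) = h - nmul t \<mu>"
    using assms(7) by (auto simp: sum_of_nonzeros_def)
  have "\<forall>j<t. sum_of_nonzeros (q j) (0::'a)"
    using sum_of_nonzeros_ge_2[OF assms(1)] assms(3) by blast
  then obtain b :: "nat \<Rightarrow> nat \<Rightarrow> 'a"
    where b: "\<forall>j<t. (\<forall>k<q j. b j k \<noteq> 0) \<and> (\<Sum>k<q j. b j k) = 0"
    unfolding sum_of_nonzeros_def by metis
  have h: "h \<noteq> 0" "h + h = 0"
    using assms(4) by (auto simp: involution_def)
  define l where "l v = (case v of V1 \<Rightarrow> \<mu> | V2 \<Rightarrow> \<mu> - h | V3 \<Rightarrow> h | V4 \<Rightarrow> h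
    | P1 i \<Rightarrow> a i | P2 i \<Rightarrow> \<mu> | S j \<Rightarrow> \<mu> | L j k \<Rightarrow> b j k)" for v
  let ?V = "H1_V p1 p2 t q"
  have "l v \<noteq> 0" if "v \<in> ?V" for v
    using that assms(5,6) h a(1) b by (cases v) (auto simp: l_def)
  moreover have "(\<Sum>u\<in>nbrs ?V H1_adj v. l u) = \<mu>" if "v \<in> ?V" for v
  proof (cases v)
    case V1
    have "(\<Sum>j<t. l (S j)) = nmul t \<mu>"
      by (simp add: l_def sum_const_lessThan_nmul)
    then show ?thesis
      using V1 a(2) by (simp add: H1_nbrs_sum_V1 l_def)
  next
    case V2
    then show ?thesis
      using assms(2) h(2) by (simp add: H1_nbrs_sum_V2 l_def add.assoc)
  next
    case (S j)
    then show ?thesis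
      using that b by (simp add: H1_nbrs_sum_S l_def)
  qed (use that assms(2) in \<open>auto simp: H1_nbrs l_def\<close>)
  ultimately show ?thesis
    unfolding vertex_magic_def vertex_magic_labeling_def by blast
qed

lemma H1_vertex_magic_iff:
  fixes A :: "'a::{ab_group_add, finite} itself"
  assumes "3 \<le> card (UNIV :: 'a set)" and "1 \<le> p1" and "\<forall>j<t. 1 \<le> q j"
  shows "vertex_magic A (H1_V p1 p2 t q) H1_adj \<longleftrightarrow> p2 = 0 \<and> (\<forall>j<t. 2 \<le> q j) \<and>
    (\<exists>h \<mu>::'a. involution h \<and> \<mu> \<noteq> 0 \<and> \<mu> \<noteq> h \<and> sum_of_nonzeros p1 (h - nmul t \<mu>))"
proof
  assume "vertex_magic A (H1_V p1 p2 t q) H1_adj"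
  then obtain l :: "hvert \<Rightarrow> 'a" and \<mu> where
    "\<forall>v\<in>H1_V p1 p2 t q. l v \<noteq> 0"
    "\<forall>v\<in>H1_V p1 p2 t q. (\<Sum>u\<in>nbrs (H1_V p1 p2 t q) H1_adj v. l u) = \<mu>"
    by (auto simp: vertex_magic_def vertex_magic_labeling_def)
  from H1_magic_labeling_constraints[OF this assms(2,3)] show "p2 = 0 \<and> (\<forall>j<t. 2 \<le> q j) \<and>
    (\<exists>h \<mu>::'a. involution h \<and> \<mu> \<noteq> 0 \<and> \<mu> \<noteq> h \<and> sum_of_nonzeros p1 (h - nmul t \<mu>))"
    by blast
qed (use H1_vertex_magicI[OF assms(1)] in blast)

theorem proposition3p5:
  fixes p1 p2 t :: nat and q :: "nat \<Rightarrow> nat"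
    and A :: "'a::{ab_group_add, finite} itself"
  assumes "card (UNIV :: 'a set) \<ge> 3"
    and "t \<ge> 1"
    and "\<forall>j<t. q j \<ge> 1"
    and "p1 \<ge> 1"
  shows "vertex_magic A (H1_V p1 p2 t q) H1_adj \<longleftrightarrow>
    (p2 = 0 \<and>
     (p1 = 1 \<longrightarrow> (\<forall>j<t. q j \<ge> 2) \<and>
        (\<exists>h g :: 'a. involution h \<and> g \<noteq> 0 \<and> g \<noteq> h \<and>
           h \<noteq> nmul (degree (H1_V p1 p2 t q) H1_adj V1 - 2) g)) \<and>
     (p1 \<ge> 2 \<longrightarrow> (\<forall>j<t. q j \<ge> 2) \<and> even (card (UNIV :: 'a set))))"
proof (cases "p1 = 1")
  case True
  show ?thesis
    unfolding H1_vertex_magic_iff[OF assms(1,4,3)] H1_degree_V1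
    unfolding True sum_of_nonzeros_1_iff
    by auto
next
  case False
  then have "2 \<le> p1"
    using assms(4) by simp
  have "(\<exists>h \<mu>::'a. involution h \<and> \<mu> \<noteq> 0 \<and> \<mu> \<noteq> h \<and> sum_of_nonzeros p1 (h - nmul t \<mu>))
    \<longleftrightarrow> (\<exists>h::'a. involution h)"
    using sum_of_nonzeros_ge_2[OF assms(1) \<open>2 \<le> p1\<close>] card_ge_3_ex_neq[OF assms(1)] by blast
  then show ?thesis
    using False \<open>2 \<le> p1\<close>
    by (simp add: H1_vertex_magic_iff[OF assms(1,4,3)] even_card_iff_involution)
qed

end
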